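(* Let $\nu$ be a class (ii) distribution with associated functions $f,\varphi,\Phi$, let $\theta>1$, and suppose that for all constants $\alpha\ge0$ and $s\in(0,1)$, \[\liminf_{x\to\infty}\frac{\Phi^{-1}(\varphi(x)-\alpha\log x)}{x^s}>0.\] Let $\eta$ be a distribution with density $g$ such that $\liminf_{x\to\infty}x^{t+1}g(x)>0$ for some $t\in(1,\theta)$. Then $D_{F_\Phi}(\eta|\nu)=\infty$. Moreover, the displayed condition holds whenever $\nu$ is a generalized lognormal distribution with $r>1$ and $\Phi(x)=\frac{1}{r\sigma^r}\log(x)^r$.
   Context: Densities are written $f=e^{-\varphi}$. For strictly convex $F$ with $F(1)=0$, $D_F(\eta|\nu)=\int_0^\infty F(g/f)f\,dx$ if $\eta\ll\nu$ and $+\infty$ otherwise. Class (ii): $\lim_{x\to\infty}\varphi(x)/x=0$, $\lim_{x\to\infty}\varphi(x)/\log x=\infty$, and there exist $\bar x>0$ and $\Phi:\mathbb R_+\to\mathbb R$ positive, strictly concave, twice differentiable and increasing on $[\bar x,\infty)$ such that, with $\Phi^{-1}$ the inverse of $\Phi|_{[\bar x,\infty)}$, $0<\liminf_{x\to\infty}\Phi^{-1}(\varphi(x))/x\le\limsup_{x\to\infty}\Phi^{-1}(\varphi(x))/x<\infty$. With $\bar y=\exp(\Phi(\bar x))$: $F_\Phi(y)=y\log y$ for $y\le\bar y$ and $F_\Phi(y)=a\,y\,\Phi^{-1}(\log y)^\theta+b$ for $y>\bar y$, where $a=\frac{1+\log\bar y}{\Phi^{-1}(\log\bar y)^\theta+\theta\Phi^{-1}(\log\bar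 y)^{\theta-1}(\Phi^{-1})'(\log\bar y)}$, $b=\bar y\log\bar y-a\bar y\Phi^{-1}(\log\bar y)^\theta$. The generalized lognormal density is $f(x)=\frac{1}{Zx}\exp(-\frac{1}{r\sigma^r}|\log x-\mu|^r)$, $x>0$, with $Z=2r^{1/r}\sigma\Gamma(1+1/r)$, $r>1$, $\sigma>0$, $\mu\in\mathbb R$. *)

theory Defs
  imports "HOL-Analysis.Analysis"
begin

definition strictly_concave_on :: "real set \<Rightarrow> (real \<Rightarrow> real) \<Rightarrow> bool" where
  "strictly_concave_on S h \<longleftrightarrow>
     (\<forall>x\<in>S. \<forall>y\<in>S. \<forall>u. x \<noteq> y \<and> 0 < u \<and> u < 1 \<longrightarrow>
        h (u * x + (1 - u) * y) > u * h x + (1 - u) * h y)"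

definition dens_measure :: "(real \<Rightarrow> real) \<Rightarrow> real measure" where
  "dens_measure d = density lborel (\<lambda>x. ennreal (indicator {0<..} x * d x))"

definition is_density :: "(real \<Rightarrow> real) \<Rightarrow> bool" where
  "is_density d \<longleftrightarrow> d \<in> borel_measurable borel \<and> (\<forall>x>0. d x \<ge> 0)
     \<and> (\<integral>\<^sup>+x. ennreal (indicator {0<..} x * d x) \<partial>lborel) = 1"

definition ext_integral :: "real measure \<Rightarrow> (real \<Rightarrow> real) \<Rightarrow> ereal" where
  "ext_integral M h =
    (let P = (\<integral>\<^sup>+x. ennreal (h x) \<partial>M); N = (\<integral>\<^sup>+x. ennreal (- h x) \<partial>M)
     in if P = \<infinity> \<and> N = \<infinity> then undefined else enn2ereal P - enn2ereal N)"

(* D_F(eta|nu), eta with density g, nu with density f, both on (0,oo) *)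
definition f_divergence :: "(real \<Rightarrow> real) \<Rightarrow> (real \<Rightarrow> real) \<Rightarrow> (real \<Rightarrow> real) \<Rightarrow> ereal" where
  "f_divergence F g f =
    (if absolutely_continuous (dens_measure f) (dens_measure g)
     then ext_integral lborel (\<lambda>x. indicator {0<..} x * (F (g x / f x) * f x))
     else \<infinity>)"

definition Phi_inv :: "(real \<Rightarrow> real) \<Rightarrow> real \<Rightarrow> real \<Rightarrow> real" where
  "Phi_inv Phi xb = the_inv_into {xb..} Phi"

definition class_ii :: "(real \<Rightarrow> real) \<Rightarrow> (real \<Rightarrow> real) \<Rightarrow> real \<Rightarrow> bool" where
  "class_ii phi Phi xb \<longleftrightarrow>
     is_density (\<lambda>x. exp (- phi x))
   \<and> ((\<lambda>x. phi x / x) \<longlongrightarrow> 0) at_top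
   \<and> filterlim (\<lambda>x. phi x / ln x) at_top at_top
   \<and> xb > 0
   \<and> (\<forall>x\<ge>xb. Phi x > 0)
   \<and> strictly_concave_on {xb..} Phi
   \<and> strict_mono_on {xb..} Phi
   \<and> (\<exists>Phi' Phi''. \<forall>x\<ge>xb. (Phi has_real_derivative Phi' x) (at x within {xb..})
                         \<and> (Phi' has_real_derivative Phi'' x) (at x within {xb..}))
   \<and> (\<forall>\<^sub>F x in at_top. phi x \<in> Phi ` {xb..})
   \<and> 0 < Liminf at_top (\<lambda>x. ereal (Phi_inv Phi xb (phi x) / x))
   \<and> Limsup at_top (\<lambda>x. ereal (Phi_inv Phi xb (phi x) / x)) < \<infinity>"

definition F_Phi :: "(real \<Rightarrow> real) \<Rightarrow> real \<Rightarrow> real \<Rightarrow> real \<Rightarrow> real" where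
  "F_Phi Phi xb \<theta> y =
    (let yb = exp (Phi xb); Pinv = Phi_inv Phi xb;
         d = (THE d. (Pinv has_real_derivative d) (at (ln yb) within {ln yb..}));
         a = (1 + ln yb) / (Pinv (ln yb) powr \<theta> + \<theta> * Pinv (ln yb) powr (\<theta> - 1) * d);
         b = yb * ln yb - a * yb * Pinv (ln yb) powr \<theta>
     in if y \<le> yb then y * ln y else a * y * Pinv (ln y) powr \<theta> + b)"

definition lognormal_Z :: "real \<Rightarrow> real \<Rightarrow> real" where
  "lognormal_Z r \<sigma> = 2 * r powr (1 / r) * \<sigma> * Gamma (1 + 1 / r)"

definition gen_lognormal :: "real \<Rightarrow> real \<Rightarrow> real \<Rightarrow> real \<Rightarrow> real" where
  "gen_lognormal r \<sigma> \<mu> x =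
     1 / (lognormal_Z r \<sigma> * x) * exp (- (1 / (r * \<sigma> powr r)) * \<bar>ln x - \<mu>\<bar> powr r)"

end

theory Submission
  imports Defs
begin

text \<open>On the tail \<open>g \<ge> c\<^sub>0 x\<^sup>-\<^sup>t\<^sup>-\<^sup>1\<close> while \<open>f = e\<^sup>-\<^sup>\<phi>\<close> decays faster than any power, so
  \<open>ln (g/f) \<ge> \<phi>(x) - (t + 2) ln x\<close> and the growth hypothesis gives \<open>\<Phi>\<^sup>-\<^sup>1(ln (g/f)) \<ge> c x\<^sup>s\<close>.
  The leading term \<open>a g \<Phi>\<^sup>-\<^sup>1(ln (g/f))\<^sup>\<theta>\<close> of \<open>F\<^sub>\<Phi>(g/f) f\<close> is then at least
  \<open>C x\<^sup>s\<^sup>\<theta>\<^sup>-\<^sup>t\<^sup>-\<^sup>1\<close>, which is not integrable at infinity once \<open>s < 1\<close> is chosen with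
  \<open>s\<theta> > t\<close>; the constant term \<open>b f\<close> is negligible. As \<open>F\<^sub>\<Phi>\<close> is bounded below and \<open>f\<close>
  is a probability density, the negative part of the integrand has finite integral, so the
  divergence is \<open>\<infinity>\<close>.

  For the generalized lognormal law \<open>\<Phi>\<^sup>-\<^sup>1(y) = exp ((r \<sigma>\<^sup>r y)\<^sup>1\<^sup>/\<^sup>r)\<close>, and
  \<open>\<phi>(x) - \<alpha> ln x = \<bar>ln x - \<mu>\<bar>\<^sup>r / (r \<sigma>\<^sup>r) + O(ln x)\<close> eventually exceeds
  \<open>(s ln x)\<^sup>r / (r \<sigma>\<^sup>r)\<close>, whence \<open>\<Phi>\<^sup>-\<^sup>1(\<phi>(x) - \<alpha> ln x) \<ge> x\<^sup>s\<close>.\<close>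

subsection \<open>The inverse of \<open>\<Phi>\<close>\<close>

lemma Phi_inv_Phi:
  assumes "strict_mono_on {xb..} Phi" and "xb \<le> z"
  shows "Phi_inv Phi xb (Phi z) = z"
  using assms by (simp add: Phi_inv_def the_inv_into_f_f strict_mono_on_imp_inj_on)

lemma Phi_Phi_inv:
  assumes mono: "strict_mono_on {xb..} Phi" and cont: "continuous_on {xb..} Phi"
    and unbounded: "\<And>M. \<exists>z\<ge>xb. M \<le> Phi z" and y: "Phi xb \<le> y"
  shows "xb \<le> Phi_inv Phi xb y" and "Phi (Phi_inv Phi xb y) = y"
proof -
  obtain z where z: "xb \<le> z" "y \<le> Phi z" using unbounded by blast
  have "continuous_on {xb..z} Phi" using cont by (rule continuous_on_subset) auto
  then obtain x where "xb \<le> x" "Phi x = y" using IVT'[of Phi xb y z] y z by auto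
  then show "xb \<le> Phi_inv Phi xb y" "Phi (Phi_inv Phi xb y) = y"
    using Phi_inv_Phi[OF mono] by auto
qed

lemma Phi_inv_mono:
  assumes mono: "strict_mono_on {xb..} Phi" and cont: "continuous_on {xb..} Phi"
    and unbounded: "\<And>M. \<exists>z\<ge>xb. M \<le> Phi z" and "Phi xb \<le> y1" "y1 \<le> y2"
  shows "Phi_inv Phi xb y1 \<le> Phi_inv Phi xb y2"
proof (rule ccontr)
  note inv = Phi_Phi_inv[OF mono cont unbounded]
  assume "\<not> ?thesis"
  then have "Phi (Phi_inv Phi xb y2) < Phi (Phi_inv Phi xb y1)"
    using inv[of y1] inv[of y2] assms by (intro strict_mono_onD[OF mono]) auto
  then show False using inv[of y1] inv[of y2] assms by auto
qed

lemma Phi_inv_has_real_derivative: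
  assumes mono: "strict_mono_on {xb..} Phi" and cont: "continuous_on {xb..} Phi"
    and deriv: "(Phi has_real_derivative D) (at xb within {xb..})" and "D \<noteq> 0"
  shows "(Phi_inv Phi xb has_real_derivative inverse D) (at (Phi xb) within {Phi xb..})"
proof -
  define y1 where "y1 = Phi (xb + 1)"
  have y1: "Phi xb < y1" using strict_mono_onD[OF mono, of xb "xb + 1"] by (simp add: y1_def)
  have le: "Phi u \<le> Phi v" if "u \<in> {xb..}" "v \<in> {xb..}" "u \<le> v" for u v
    using strict_mono_onD[OF mono, of u v] that by (cases "u = v") auto
  have cont1: "continuous_on {xb..xb+1} Phi" using cont by (rule continuous_on_subset) auto
  have img: "Phi ` {xb..xb+1} = {Phi xb..y1}"
  proof
    show "Phi ` {xb..xb+1} \<subseteq> {Phi xb..y1}" by (auto simp: y1_def intro!: le)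
    show "{Phi xb..y1} \<subseteq> Phi ` {xb..xb+1}"
      using IVT'[of Phi xb _ "xb + 1"] cont1 by (force simp: y1_def)
  qed
  have inv: "Phi_inv Phi xb (Phi x) = x" if "x \<in> {xb..xb+1}" for x
    using Phi_inv_Phi[OF mono] that by simp
  have "continuous_on (Phi ` {xb..xb+1}) (Phi_inv Phi xb)"
    using cont1 inv by (intro continuous_on_inv) auto
  then have cont_inv: "continuous (at (Phi xb) within Phi ` {xb..xb+1}) (Phi_inv Phi xb)"
    using img y1 by (simp add: continuous_on_eq_continuous_within)
  have "(Phi has_derivative (*) D) (at xb within {xb..xb+1})"
    using has_field_derivative_subset[OF deriv, of "{xb..xb+1}"] by (auto simp: has_field_derivative_def)
  then have "(Phi_inv Phi xb has_derivative (*) (inverse D)) (at (Phi xb) within Phi ` {xb..xb+1})"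
    by (rule has_derivative_inverse_within[OF _ cont_inv]) (use assms(4) inv in \<open>auto simp: fun_eq_iff\<close>)
  moreover have "at (Phi xb) within Phi ` {xb..xb+1} = at (Phi xb) within {Phi xb..}"
    unfolding img by (rule at_within_nhd[of _ "{..<y1}"]) (use y1 in auto)
  ultimately show ?thesis by (simp add: has_field_derivative_def mult.commute)
qed

text \<open>Concavity bounds the difference quotients at \<open>xb\<close> from below by the slope of the chord
  to \<open>xb + 1\<close>, which is positive by monotonicity.\<close>

lemma strictly_concave_increasing_deriv_pos:
  assumes conc: "strictly_concave_on {xb..} Phi" and mono: "strict_mono_on {xb..} Phi"
    and deriv: "(Phi has_real_derivative D) (at xb within {xb..})"
  shows "D > 0"
proof -
  define m where "m = Phi (xb + 1) - Phi xb"
  have m: "m > 0" using strict_mono_onD[OF mono, of xb "xb + 1"] by (simp add: m_def)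
  have lim: "((\<lambda>y. (Phi y - Phi xb) / (y - xb)) \<longlongrightarrow> D) (at_right xb)"
    using deriv by (simp add: has_field_derivative_iff at_within_Ici_at_right)
  have "eventually (\<lambda>y. m \<le> (Phi y - Phi xb) / (y - xb)) (at_right xb)"
    unfolding eventually_at_right_field
  proof (intro exI[of _ "xb + 1"] conjI allI impI)
    fix y assume y: "xb < y" "y < xb + 1"
    have "u * Phi (xb + 1) + (1 - u) * Phi xb < Phi (u * (xb + 1) + (1 - u) * xb)"
      if "0 < u" "u < 1" for u
      using conc that unfolding strictly_concave_on_def by auto
    from this[of "y - xb"] y have "(y - xb) * m < Phi y - Phi xb"
      by (simp add: m_def algebra_simps)
    then show "m \<le> (Phi y - Phi xb) / (y - xb)" using y by (simp add: field_simps)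
  qed simp
  then show ?thesis using tendsto_lowerbound[OF lim] m by force
qed

lemma class_ii_continuous_on:
  assumes "class_ii phi Phi xb"
  shows "continuous_on {xb..} Phi"
proof -
  obtain Phi' Phi'' where "\<And>x. x \<ge> xb \<Longrightarrow> (Phi has_real_derivative Phi' x) (at x within {xb..})"
    using assms unfolding class_ii_def by blast
  then show ?thesis
    unfolding continuous_on_eq_continuous_within by (blast intro: DERIV_continuous)
qed

lemma class_ii_Phi_unbounded:
  assumes "class_ii phi Phi xb"
  shows "\<exists>z\<ge>xb. M \<le> Phi z"
proof -
  have "eventually (\<lambda>x. 1 \<le> phi x / ln x) at_top"
    using assms unfolding class_ii_def filterlim_at_top by blast
  moreover have "eventually (\<lambda>x. phi x \<in> Phi ` {xb..}) at_top"
    using assms unfolding class_ii_def by blast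
  moreover have "eventually (\<lambda>x. max (exp M) 3 \<le> x) at_top" by (rule eventually_ge_at_top)
  ultimately have "eventually (\<lambda>x. M \<le> phi x \<and> phi x \<in> Phi ` {xb..}) at_top"
  proof eventually_elim
    case (elim x)
    have "0 < ln (3::real)" by simp
    moreover have "ln 3 \<le> ln x" "M \<le> ln x"
      using elim by (auto simp: ln_ge_iff)
    ultimately show ?case using elim by (simp add: le_divide_eq split: if_splits)
  qed
  then obtain x where "M \<le> phi x" "phi x \<in> Phi ` {xb..}"
    using eventually_happens'[OF trivial_limit_at_top_linorder] by blast
  then show ?thesis by auto
qed

lemma class_ii_Phi_inv_mono:
  assumes "class_ii phi Phi xb" and "Phi xb \<le> y1" "y1 \<le> y2"
  shows "Phi_inv Phi xb y1 \<le> Phi_inv Phi xb y2"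
proof (rule Phi_inv_mono[OF _ class_ii_continuous_on class_ii_Phi_unbounded])
  show "strict_mono_on {xb..} Phi" using assms(1) unfolding class_ii_def by blast
qed (use assms in auto)

lemma class_ii_Phi_inv_deriv_pos:
  assumes cl: "class_ii phi Phi xb"
  shows "(THE d. (Phi_inv Phi xb has_real_derivative d) (at (Phi xb) within {Phi xb..})) > 0"
proof -
  have conc: "strictly_concave_on {xb..} Phi" and mono: "strict_mono_on {xb..} Phi"
    using cl unfolding class_ii_def by auto
  obtain Phi' Phi'' where "\<And>x. x \<ge> xb \<Longrightarrow> (Phi has_real_derivative Phi' x) (at x within {xb..})"
    using cl unfolding class_ii_def by blast
  then have deriv: "(Phi has_real_derivative Phi' xb) (at xb within {xb..})" by simp
  have D: "Phi' xb > 0" by (rule strictly_concave_increasing_deriv_pos[OF conc mono deriv])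
  have inv: "(Phi_inv Phi xb has_real_derivative inverse (Phi' xb)) (at (Phi xb) within {Phi xb..})"
    using Phi_inv_has_real_derivative[OF mono class_ii_continuous_on[OF cl] deriv] D by simp
  have "at (Phi xb) within {Phi xb..} \<noteq> bot" by (simp add: at_within_Ici_at_right)
  then have "(THE d. (Phi_inv Phi xb has_real_derivative d) (at (Phi xb) within {Phi xb..}))
      = inverse (Phi' xb)"
    using inv vector_derivative_unique_within
    by (intro the_equality) (auto simp: has_real_derivative_iff_has_vector_derivative)
  then show ?thesis using D by simp
qed

subsection \<open>Infinite \<open>F\<^sub>\<Phi>\<close>-divergence\<close>

lemma F_Phi_cases:
  assumes cl: "class_ii phi Phi xb" and "\<theta> > 1"
  obtains a b where "a > 0" and
    "\<And>y. F_Phi Phi xb \<theta> y = (if y \<le> exp (Phi xb) then y * ln y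
                               else a * y * Phi_inv Phi xb (ln y) powr \<theta> + b)"
proof -
  define P where "P = Phi_inv Phi xb"
  define d where "d = (THE d. (P has_real_derivative d) (at (Phi xb) within {Phi xb..}))"
  define a where "a = (1 + Phi xb) / (P (Phi xb) powr \<theta> + \<theta> * P (Phi xb) powr (\<theta> - 1) * d)"
  have "d > 0" using class_ii_Phi_inv_deriv_pos[OF cl] by (simp add: d_def P_def)
  moreover have "P (Phi xb) = xb" "xb > 0" "Phi xb > 0"
    using Phi_inv_Phi[of xb Phi xb] cl by (auto simp: P_def class_ii_def)
  ultimately have "a > 0" using \<open>\<theta> > 1\<close> by (simp add: a_def add_pos_nonneg)
  then show ?thesis
    by (rule that[of a "exp (Phi xb) * Phi xb - a * exp (Phi xb) * P (Phi xb) powr \<theta>"])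
      (simp add: F_Phi_def Let_def a_def d_def P_def)
qed

lemma F_Phi_bdd_below:
  assumes "class_ii phi Phi xb" and "\<theta> > 1"
  shows "bdd_below (F_Phi Phi xb \<theta> ` {0..})"
proof -
  obtain a b where a: "a > 0" and F: "\<And>y. F_Phi Phi xb \<theta> y = (if y \<le> exp (Phi xb) then y * ln y
                               else a * y * Phi_inv Phi xb (ln y) powr \<theta> + b)"
    using F_Phi_cases[OF assms] by blast
  have "min (-1) b \<le> F_Phi Phi xb \<theta> y" if "y \<ge> 0" for y
  proof (cases "y \<le> exp (Phi xb)")
    case True
    have "-1 \<le> y * ln y"
    proof (cases "y = 0")
      case False
      with \<open>y \<ge> 0\<close> have "ln (1 / y) \<le> 1 / y - 1" by (intro ln_le_minus_one) simp
      with False \<open>y \<ge> 0\<close> show ?thesis by (simp add: ln_div field_simps)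
    qed simp
    then show ?thesis using True F[of y] by simp
  next
    case False
    have "0 \<le> a * y * Phi_inv Phi xb (ln y) powr \<theta>" using a that by simp
    then show ?thesis using False F[of y] by simp
  qed
  then show ?thesis by (intro bdd_belowI[where m = "min (-1) b"]) auto
qed

lemma nn_integral_powr_Ici_eq_infinity:
  fixes C X e :: real
  assumes C: "C > 0" and X: "X \<ge> 1" and e: "e > -1"
  shows "(\<integral>\<^sup>+x. ennreal (C * x powr e * indicator {X..} x) \<partial>lborel) = \<infinity>"
proof (rule ccontr)
  define I where "I = (\<integral>\<^sup>+x. ennreal (C * x powr e * indicator {X..} x) \<partial>lborel)"
  assume "\<not> ?thesis"
  then obtain R where R: "0 \<le> R" "I = ennreal R"
    by (cases I rule: ennreal_cases) (auto simp: I_def)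
  define e' where "e' = min e 0"
  define q where "q = 1 + e'"
  have q: "q > 0" using e by (simp add: q_def e'_def)
  define A where "A = R / C + X + 1"
  have A: "A > 0" using R C X by (simp add: A_def add_nonneg_pos)
  text \<open>On \<open>[X, Y]\<close> the integrand is at least \<open>C Y\<^sup>e\<^sup>'\<close>, and \<open>Y\<^sup>e\<^sup>' (Y - X) \<ge> Y\<^sup>q - X\<close>
    is as large as we like.\<close>
  define Y where "Y = max X (A powr (1 / q))"
  have Y: "1 \<le> Y" "X \<le> Y" using X by (auto simp: Y_def)
  have "(A powr (1 / q)) powr q \<le> Y powr q" using q by (intro powr_mono2) (auto simp: Y_def)
  then have YA: "A \<le> Y powr q" using A q by (simp add: powr_powr)
  have Ye: "Y powr e' \<le> 1" using powr_mono[of e' 0 Y] Y by (simp add: e'_def)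
  have "ennreal (C * Y powr e' * indicator {X..Y} x) \<le> ennreal (C * x powr e * indicator {X..} x)" for x
  proof (cases "x \<in> {X..Y}")
    case True
    then have "x \<ge> 1" using X by auto
    then have "Y powr e' \<le> x powr e"
      using True powr_mono[of e' e x] powr_mono2'[of e' x Y] by (force simp: e'_def)
    then show ?thesis using True C by (auto intro!: ennreal_leI)
  qed simp
  then have "(\<integral>\<^sup>+x. ennreal (C * Y powr e' * indicator {X..Y} x) \<partial>lborel) \<le> I"
    unfolding I_def by (intro nn_integral_mono)
  also have "(\<integral>\<^sup>+x. ennreal (C * Y powr e' * indicator {X..Y} x) \<partial>lborel)
      = (\<integral>\<^sup>+x. ennreal (C * Y powr e') * indicator {X..Y} x \<partial>lborel)"
    by (intro nn_integral_cong) (auto split: split_indicator)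
  also have "\<dots> = ennreal (C * Y powr e' * (Y - X))"
    using Y C by (simp add: nn_integral_cmult_indicator ennreal_mult)
  finally have "C * Y powr e' * (Y - X) \<le> R" using R C by simp
  moreover have "Y powr e' * (Y - X) = Y powr q - X * Y powr e'"
    using Y by (simp add: q_def powr_add algebra_simps)
  moreover have "X * Y powr e' \<le> X" using Ye X by (simp add: mult_left_le)
  ultimately have "C * (A - X) \<le> R" using C YA
    by (smt (verit) mult.assoc mult_left_mono)
  moreover have "C * (A - X) = R + C" using C by (simp add: A_def field_simps)
  ultimately show False using C by linarith
qed

lemma f_divergence_eq_infinity_if_tail_ge_powr:
  fixes F g f :: "real \<Rightarrow> real"
  assumes f: "is_density f" "\<And>x. 0 < f x" and g: "\<And>x. 0 < x \<Longrightarrow> 0 \<le> g x"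
    and F: "bdd_below (F ` {0..})"
    and tail: "eventually (\<lambda>x. C * x powr e \<le> F (g x / f x) * f x) at_top"
    and C: "C > 0" and e: "e > -1"
  shows "f_divergence F g f = \<infinity>"
proof -
  define h where "h x = indicator {0<..} x * (F (g x / f x) * f x)" for x
  obtain m where m: "\<And>y. 0 \<le> y \<Longrightarrow> m \<le> F y" using F by (auto simp: bdd_below_def)
  define B where "B = max 0 (- m)"
  have "ennreal (- h x) \<le> ennreal B * ennreal (indicator {0<..} x * f x)" for x
  proof (cases "0 < x")
    case True
    have "- m * f x \<le> B * f x" using f(2)[of x] by (intro mult_right_mono) (auto simp: B_def)
    moreover have "m * f x \<le> F (g x / f x) * f x"
      using m[of "g x / f x"] f(2)[of x] g[OF True] by (intro mult_right_mono) auto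
    ultimately have "- h x \<le> B * (indicator {0<..} x * f x)" using True by (simp add: h_def)
    then show ?thesis
      using f(2)[of x] by (simp add: B_def ennreal_mult[symmetric] ennreal_leI)
  qed (simp add: h_def)
  then have "(\<integral>\<^sup>+x. ennreal (- h x) \<partial>lborel)
      \<le> (\<integral>\<^sup>+x. ennreal B * ennreal (indicator {0<..} x * f x) \<partial>lborel)"
    by (intro nn_integral_mono)
  also have "\<dots> = ennreal B"
    using f(1) by (subst nn_integral_cmult) (auto simp: is_density_def)
  finally have neg: "(\<integral>\<^sup>+x. ennreal (- h x) \<partial>lborel) \<noteq> \<infinity>"
    by (auto simp: top_unique)
  obtain X where X: "\<And>x. X \<le> x \<Longrightarrow> C * x powr e \<le> F (g x / f x) * f x"
    using tail unfolding eventually_at_top_linorder by blast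
  have "\<infinity> = (\<integral>\<^sup>+x. ennreal (C * x powr e * indicator {max X 1..} x) \<partial>lborel)"
    using C e by (simp add: nn_integral_powr_Ici_eq_infinity)
  also have "\<dots> \<le> (\<integral>\<^sup>+x. ennreal (h x) \<partial>lborel)"
    using X by (intro nn_integral_mono) (auto simp: h_def split: split_indicator intro: ennreal_leI)
  finally have pos: "(\<integral>\<^sup>+x. ennreal (h x) \<partial>lborel) = \<infinity>"
    by (simp add: top_unique)
  have "ext_integral lborel h = \<infinity>"
    using pos neg unfolding ext_integral_def Let_def by (auto simp: ennreal_cases)
  \<comment> \<open>Both branches of \<open>f_divergence\<close> are then \<open>\<infinity>\<close>: absolute continuity is irrelevant.\<close>
  then show ?thesis by (simp add: f_divergence_def h_def[abs_def])
qed

lemma Liminf_pos_imp_eventually_gt: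
  assumes "0 < Liminf F (\<lambda>x. ereal (h x))"
  obtains c where "c > 0" and "eventually (\<lambda>x. c < h x) F"
proof -
  obtain c where "0 < ereal c" "ereal c < Liminf F (\<lambda>x. ereal (h x))"
    using ereal_dense2[OF assms] by blast
  then show ?thesis using less_LiminfD that by fastforce
qed

lemma ln_ge_of_powr_mult_ge:
  fixes x c t y :: real
  assumes x: "0 < x" and cx: "1 \<le> c * x" and y: "c \<le> x powr (t + 1) * y"
  shows "0 < y" and "- ((t + 2) * ln x) \<le> ln y"
proof -
  have c: "0 < c" using x cx by (smt (verit) mult_nonpos_nonneg)
  have lower: "c / x powr (t + 1) \<le> y" using x y by (simp add: field_simps)
  moreover have "0 < c / x powr (t + 1)" using c x by simp
  ultimately show "0 < y" by linarith
  have "ln c - (t + 1) * ln x \<le> ln y"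
    using lower c x \<open>0 < y\<close> by (subst (asm) ln_le_cancel_iff[symmetric]) (auto simp: ln_div ln_powr)
  moreover have "0 \<le> ln c + ln x" using cx c x by (metis ln_ge_zero ln_mult_pos)
  ultimately show "- ((t + 2) * ln x) \<le> ln y" by (simp add: algebra_simps)
qed

lemma one_le_mult_powr:
  fixes c s x :: real
  assumes "0 < c" "0 < s" "(1 / c) powr (1 / s) \<le> x"
  shows "1 \<le> c * x powr s"
proof -
  have "((1 / c) powr (1 / s)) powr s \<le> x powr s" using assms by (intro powr_mono2) auto
  moreover have "((1 / c) powr (1 / s)) powr s = 1 / c" using assms by (simp add: powr_powr)
  ultimately show ?thesis using assms by (simp add: divide_le_eq mult.commute)
qed

lemma abs_mult_le_of_powr_bounds:
  fixes x t a b c0 g f Q :: real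
  assumes x: "0 < x" and "0 < a" "0 < c0" "1 \<le> Q" and g: "c0 / x powr (t + 1) \<le> g"
    and f: "f \<le> 1 / x powr (t + 2)" and b: "2 * \<bar>b\<bar> \<le> a * c0 * x"
  shows "\<bar>b\<bar> * f \<le> a / 2 * g * Q"
proof -
  have "x powr (t + 2) = x * x powr (t + 1)"
    using x powr_add[of x 1 "t + 1"] by (simp add: add_ac)
  then have "\<bar>b\<bar> * f \<le> \<bar>b\<bar> * (1 / (x * x powr (t + 1)))"
    using f by (intro mult_left_mono) simp_all
  also have "\<dots> = (\<bar>b\<bar> / x) / x powr (t + 1)" by simp
  also have "\<dots> \<le> (a * c0 / 2) / x powr (t + 1)"
    using b x by (intro divide_right_mono) (auto simp: divide_le_eq)
  also have "\<dots> \<le> a / 2 * g"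
    using mult_left_mono[OF g, of "a / 2"] assms by simp
  also have "\<dots> \<le> a / 2 * g * Q"
    using mult_left_mono[OF \<open>1 \<le> Q\<close>, of "a / 2 * g"] assms
    by (simp add: order_trans[OF _ g] less_imp_le)
  finally show ?thesis .
qed

lemma eventually_Phi_inv_ln_ratio_ge_powr:
  assumes cl: "class_ii phi Phi xb" and s: "0 < s"
    and growth: "0 < Liminf at_top (\<lambda>x. ereal (Phi_inv Phi xb (phi x - (t + 2) * ln x) / x powr s))"
    and g: "0 < Liminf at_top (\<lambda>x. ereal (x powr (t + 1) * g x))"
  obtains c where "c > 0" and
    "eventually (\<lambda>x. exp (Phi xb) < g x / exp (- phi x) \<and> 1 \<le> c * x powr s
                     \<and> c * x powr s \<le> Phi_inv Phi xb (ln (g x / exp (- phi x)))) at_top"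
proof -
  obtain c0 where c0: "c0 > 0" and ev_g: "eventually (\<lambda>x. c0 < x powr (t + 1) * g x) at_top"
    using Liminf_pos_imp_eventually_gt[OF g] by blast
  obtain c where c: "c > 0"
    and ev_P: "eventually (\<lambda>x. c < Phi_inv Phi xb (phi x - (t + 2) * ln x) / x powr s) at_top"
    using Liminf_pos_imp_eventually_gt[OF growth] by blast
  have ev_phi: "eventually (\<lambda>x. t + 3 \<le> phi x / ln x) at_top"
    using cl unfolding class_ii_def filterlim_at_top by blast
  have "0 < Phi xb" using cl by (simp add: class_ii_def)
  have "eventually (\<lambda>x. exp (Phi xb) < g x / exp (- phi x) \<and> 1 \<le> c * x powr s
                     \<and> c * x powr s \<le> Phi_inv Phi xb (ln (g x / exp (- phi x)))) at_top"
    using ev_g ev_P ev_phi eventually_ge_at_top[of "max (exp (Phi xb + 1)) (max (1 / c0) ((1 / c) powr (1 / s)))"]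
  proof eventually_elim
    case (elim x)
    have x_ge: "exp (Phi xb + 1) \<le> x" "1 \<le> c0 * x" "(1 / c) powr (1 / s) \<le> x"
      using elim(4) c0 by (auto simp: field_simps)
    have x: "0 < x" using x_ge(1) exp_gt_zero[of "Phi xb + 1"] by linarith
    then have lnx: "Phi xb + 1 \<le> ln x" using x_ge(1) by (simp add: ln_ge_iff)
    have phi: "(t + 3) * ln x \<le> phi x" using elim(3) lnx \<open>0 < Phi xb\<close> by (simp add: pos_le_divide_eq)
    have gx: "0 < g x" "- ((t + 2) * ln x) \<le> ln (g x)"
      using ln_ge_of_powr_mult_ge[OF x x_ge(2), of t "g x"] elim(1) by auto
    define y where "y = g x / exp (- phi x)"
    have ln_y: "phi x - (t + 2) * ln x \<le> ln y" using gx by (simp add: y_def ln_div)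
    then have "Phi xb < ln y" using phi lnx by (simp add: algebra_simps)
    then have "exp (Phi xb) < y"
      using gx by (simp add: y_def ln_less_cancel_iff[symmetric] del: ln_less_cancel_iff)
    moreover have "c * x powr s \<le> Phi_inv Phi xb (phi x - (t + 2) * ln x)"
      using elim(2) x by (simp add: field_simps)
    moreover have "\<dots> \<le> Phi_inv Phi xb (ln y)"
      using class_ii_Phi_inv_mono[OF cl _ ln_y] phi lnx by (simp add: algebra_simps)
    ultimately show ?case using one_le_mult_powr[OF c s x_ge(3)] by (simp add: y_def)
  qed
  with c show ?thesis by (rule that)
qed

lemma F_Phi_integrand_eventually_ge_powr:
  assumes cl: "class_ii phi Phi xb" and \<theta>: "\<theta> > 1" and s: "0 < s"
    and growth: "0 < Liminf at_top (\<lambda>x. ereal (Phi_inv Phi xb (phi x - (t + 2) * ln x) / x powr s))"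
    and g: "0 < Liminf at_top (\<lambda>x. ereal (x powr (t + 1) * g x))"
  obtains C where "C > 0" and
    "eventually (\<lambda>x. C * x powr (s * \<theta> - t - 1)
                     \<le> F_Phi Phi xb \<theta> (g x / exp (- phi x)) * exp (- phi x)) at_top"
proof -
  define f where "f x = exp (- phi x)" for x
  define P where "P = Phi_inv Phi xb"
  obtain a b where a: "a > 0" and F: "\<And>y. F_Phi Phi xb \<theta> y = (if y \<le> exp (Phi xb) then y * ln y
                               else a * y * P (ln y) powr \<theta> + b)"
    using F_Phi_cases[OF cl \<theta>] unfolding P_def by blast
  obtain c0 where c0: "c0 > 0" and ev_g: "eventually (\<lambda>x. c0 < x powr (t + 1) * g x) at_top"
    using Liminf_pos_imp_eventually_gt[OF g] by blast
  obtain c1 where c1: "c1 > 0" and ev_P: "eventually (\<lambda>x. exp (Phi xb) < g x / f x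
      \<and> 1 \<le> c1 * x powr s \<and> c1 * x powr s \<le> P (ln (g x / f x))) at_top"
    using eventually_Phi_inv_ln_ratio_ge_powr[OF cl s growth g] unfolding f_def P_def by blast
  have ev_phi: "eventually (\<lambda>x. t + 2 \<le> phi x / ln x) at_top"
    using cl unfolding class_ii_def filterlim_at_top by blast
  define C where "C = a * c0 * c1 powr \<theta> / 2"
  have "eventually (\<lambda>x. C * x powr (s * \<theta> - t - 1) \<le> F_Phi Phi xb \<theta> (g x / f x) * f x) at_top"
    using ev_g ev_P ev_phi eventually_ge_at_top[of "max 3 (2 * \<bar>b\<bar> / (a * c0))"]
  proof eventually_elim
    case (elim x)
    define y where "y = g x / f x"
    have x: "0 < x" "1 < x" and b: "2 * \<bar>b\<bar> \<le> a * c0 * x"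
      using elim(4) a c0 by (auto simp: field_simps)
    have g_lower: "c0 / x powr (t + 1) \<le> g x" using elim(1) x by (simp add: divide_le_eq mult.commute)
    have "0 < g x" using g_lower c0 x by (smt (verit) divide_pos_pos powr_gt_zero)
    have "(c1 * x powr s) powr \<theta> \<le> P (ln y) powr \<theta>" "1 \<le> (c1 * x powr s) powr \<theta>"
      using elim(2) \<theta> by (auto simp: y_def intro: powr_mono2 ge_one_powr_ge_zero)
    moreover have "(c1 * x powr s) powr \<theta> = c1 powr \<theta> * x powr (s * \<theta>)"
      using c1 x by (simp add: powr_mult powr_powr)
    ultimately have P: "c1 powr \<theta> * x powr (s * \<theta>) \<le> P (ln y) powr \<theta>" "1 \<le> P (ln y) powr \<theta>"
      by linarith+
    have "(t + 2) * ln x \<le> phi x" using elim(3) x by (simp add: pos_le_divide_eq)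
    then have "f x \<le> exp (- ((t + 2) * ln x))" by (simp add: f_def)
    also have "\<dots> = 1 / x powr (t + 2)" using x by (simp add: powr_def exp_minus inverse_eq_divide)
    finally have b_small: "\<bar>b\<bar> * f x \<le> a / 2 * g x * P (ln y) powr \<theta>"
      using abs_mult_le_of_powr_bounds[OF x(1) a c0 P(2) g_lower _ b] by blast
    have "F_Phi Phi xb \<theta> y * f x = a * (y * f x) * P (ln y) powr \<theta> + b * f x"
      using F[of y] elim(2) by (simp add: y_def algebra_simps)
    also have "y * f x = g x" by (simp add: y_def f_def)
    finally have "a / 2 * g x * P (ln y) powr \<theta> \<le> F_Phi Phi xb \<theta> y * f x"
      using b_small abs_ge_minus_self[of b] mult_right_mono[of "- \<bar>b\<bar>" b "f x"]
      by (simp add: f_def)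
    moreover have "C * x powr (s * \<theta> - t - 1) = a / 2 * (c0 / x powr (t + 1)) * (c1 powr \<theta> * x powr (s * \<theta>))"
      using x by (simp add: C_def powr_diff field_simps)
    moreover have "\<dots> \<le> a / 2 * g x * P (ln y) powr \<theta>"
      using g_lower P a c0 x \<open>0 < g x\<close> by (intro mult_mono) auto
    ultimately show ?case by (simp add: y_def)
  qed
  moreover have "C > 0" using a c0 c1 by (simp add: C_def)
  ultimately show ?thesis using that unfolding f_def by blast
qed

theorem f_divergence_F_Phi_eq_infinity:
  assumes cl: "class_ii phi Phi xb" and \<theta>: "\<theta> > 1"
    and growth: "\<And>\<alpha> s. 0 \<le> \<alpha> \<Longrightarrow> 0 < s \<Longrightarrow> s < 1 \<Longrightarrow>
      0 < Liminf at_top (\<lambda>x. ereal (Phi_inv Phi xb (phi x - \<alpha> * ln x) / x powr s))"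
    and g: "is_density g" and t: "0 \<le> t" "t < \<theta>"
    and g_tail: "0 < Liminf at_top (\<lambda>x. ereal (x powr (t + 1) * g x))"
  shows "f_divergence (F_Phi Phi xb \<theta>) g (\<lambda>x. exp (- phi x)) = \<infinity>"
proof -
  define s where "s = (t / \<theta> + 1) / 2"
  have s: "0 < s" "s < 1" "t < s * \<theta>" using t \<theta> by (auto simp: s_def field_simps)
  obtain C where "C > 0" and tail: "eventually (\<lambda>x. C * x powr (s * \<theta> - t - 1)
      \<le> F_Phi Phi xb \<theta> (g x / exp (- phi x)) * exp (- phi x)) at_top"
    using F_Phi_integrand_eventually_ge_powr[OF cl \<theta> s(1) growth g_tail] s t by auto
  moreover have "is_density (\<lambda>x. exp (- phi x))" using cl by (simp add: class_ii_def)
  ultimately show ?thesis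
    using f_divergence_eq_infinity_if_tail_ge_powr[OF _ _ _ F_Phi_bdd_below[OF cl \<theta>] tail] g s
    by (auto simp: is_density_def)
qed

subsection \<open>The generalized lognormal distribution\<close>

lemma minus_ln_gen_lognormal:
  assumes "r > 0" "\<sigma> > 0" "x > 0"
  shows "- ln (gen_lognormal r \<sigma> \<mu> x)
    = ln (lognormal_Z r \<sigma>) + ln x + \<bar>ln x - \<mu>\<bar> powr r / (r * \<sigma> powr r)"
proof -
  have "0 < 1 + 1 / r" using assms by (simp add: add_pos_pos)
  then have "lognormal_Z r \<sigma> > 0" using assms by (simp add: lognormal_Z_def)
  then show ?thesis using assms by (simp add: gen_lognormal_def ln_mult ln_div)
qed

lemma Phi_inv_ln_powr:
  fixes c r xb y :: real
  assumes c: "c > 0" and r: "r > 0" and xb: "xb > 1" and y: "c * ln xb powr r \<le> y"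
  shows "Phi_inv (\<lambda>x. c * ln x powr r) xb y = exp ((y / c) powr (1 / r))"
proof -
  have "strict_mono_on {xb..} (\<lambda>x. c * ln x powr r)"
    using xb c r by (intro strict_mono_onI) (auto intro!: powr_less_mono2)
  moreover have "xb \<le> exp ((y / c) powr (1 / r))"
  proof -
    have "(ln xb powr r) powr (1 / r) \<le> (y / c) powr (1 / r)"
      using y c r xb by (intro powr_mono2) (auto simp: field_simps)
    then have "ln xb \<le> (y / c) powr (1 / r)" using xb r by (simp add: powr_powr)
    then show ?thesis using xb by (metis exp_le_cancel_iff exp_ln less_trans zero_less_one)
  qed
  moreover have "c * ((y / c) powr (1 / r)) powr r = y"
    using y c r xb by (simp add: powr_powr mult_nonneg_nonneg order_trans[OF _ y])
  ultimately show ?thesis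
    unfolding Phi_inv_def using xb
    by (intro the_inv_into_f_eq strict_mono_on_imp_inj_on) auto
qed

text \<open>For \<open>L\<close> large, \<open>\<bar>L - \<mu>\<bar>\<^sup>r \<ge> l\<^sup>r L\<^sup>r\<close> with \<open>s < l < 1\<close>, and the surplus
  \<open>c (l\<^sup>r - s\<^sup>r) L\<^sup>r\<close> absorbs the linear terms since \<open>r > 1\<close>.\<close>

lemma eventually_powr_le_shifted_powr:
  fixes r s c k \<beta> \<mu> :: real
  assumes r: "r > 1" and s: "0 < s" "s < 1" and c: "c > 0"
  shows "eventually (\<lambda>L. c * (s * L) powr r \<le> k + \<beta> * L + c * \<bar>L - \<mu>\<bar> powr r) at_top"
proof -
  define l where "l = (1 + s) / 2"
  have l: "s < l" "l < 1" using s by (auto simp: l_def)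
  have gap: "s powr r < l powr r" using l s r by (intro powr_less_mono2) auto
  define M where "M = (\<bar>\<beta>\<bar> + \<bar>k\<bar>) / (c * (l powr r - s powr r))"
  have M: "M \<ge> 0" using c gap by (simp add: M_def)
  show ?thesis
    using eventually_ge_at_top[of 1] eventually_ge_at_top[of "\<mu> / (1 - l)"]
      eventually_ge_at_top[of "M powr (1 / (r - 1))"]
  proof eventually_elim
    case (elim L)
    define Q where "Q = L * L powr (r - 1)"
    have "(l * L) powr r \<le> \<bar>L - \<mu>\<bar> powr r"
      using elim l s r by (intro powr_mono2) (auto simp: field_simps)
    moreover have "(l * L) powr r = l powr r * Q" "(s * L) powr r = s powr r * Q"
      using elim l s by (simp_all add: Q_def powr_mult powr_diff)
    ultimately have lower: "c * (l powr r * Q) \<le> c * \<bar>L - \<mu>\<bar> powr r"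
      using c by (intro mult_left_mono) auto
    have "M \<le> L powr (r - 1)"
    proof -
      have "(M powr (1 / (r - 1))) powr (r - 1) \<le> L powr (r - 1)"
        using elim r by (intro powr_mono2) auto
      then show ?thesis using M r by (cases "M = 0") (auto simp: powr_powr)
    qed
    then have "\<bar>\<beta>\<bar> + \<bar>k\<bar> \<le> c * (l powr r - s powr r) * L powr (r - 1)"
      using c gap by (simp add: M_def pos_divide_le_eq mult.commute)
    then have "(\<bar>\<beta>\<bar> + \<bar>k\<bar>) * L \<le> c * (l powr r - s powr r) * Q"
      using elim mult_right_mono[of "\<bar>\<beta>\<bar> + \<bar>k\<bar>" _ L] by (simp add: Q_def mult_ac)
    moreover have "- (k + \<beta> * L) \<le> (\<bar>\<beta>\<bar> + \<bar>k\<bar>) * L"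
      using elim abs_ge_minus_self[of k] abs_ge_minus_self[of \<beta>]
        mult_right_mono[of "- \<beta>" "\<bar>\<beta>\<bar>" L] mult_left_mono[of 1 L "\<bar>k\<bar>"]
      by (simp add: algebra_simps)
    ultimately show ?case
      using lower \<open>(s * L) powr r = s powr r * Q\<close> by (simp add: algebra_simps)
  qed
qed

lemma gen_lognormal_Phi_inv_growth:
  fixes r \<sigma> \<mu> xb \<alpha> s :: real
  assumes r: "r > 1" and \<sigma>: "\<sigma> > 0" and xb: "xb > 1" and s: "0 < s" "s < 1"
  shows "0 < Liminf at_top (\<lambda>x. ereal (Phi_inv (\<lambda>x. 1 / (r * \<sigma> powr r) * ln x powr r) xb
                      (- ln (gen_lognormal r \<sigma> \<mu> x) - \<alpha> * ln x) / x powr s))"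
proof -
  define c where "c = 1 / (r * \<sigma> powr r)"
  have c: "c > 0" using r \<sigma> by (simp add: c_def)
  define k where "k = ln (lognormal_Z r \<sigma>)"
  have ev_L: "eventually (\<lambda>L. c * (s * L) powr r \<le> k + (1 - \<alpha>) * L + c * \<bar>L - \<mu>\<bar> powr r
      \<and> ln xb \<le> s * L) at_top"
    using eventually_powr_le_shifted_powr[OF r s c, of k "1 - \<alpha>" \<mu>] eventually_ge_at_top[of "ln xb / s"]
    by eventually_elim (use s in \<open>simp add: field_simps\<close>)
  have "eventually (\<lambda>x. 1 \<le> ereal (Phi_inv (\<lambda>x. c * ln x powr r) xb
      (- ln (gen_lognormal r \<sigma> \<mu> x) - \<alpha> * ln x) / x powr s)) at_top"
    using eventually_compose_filterlim[OF ev_L ln_at_top] eventually_gt_at_top[of 0]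
  proof eventually_elim
    case (elim x)
    define y where "y = - ln (gen_lognormal r \<sigma> \<mu> x) - \<alpha> * ln x"
    have y: "c * (s * ln x) powr r \<le> y"
      using elim minus_ln_gen_lognormal[of r \<sigma> x \<mu>] r \<sigma>
      by (simp add: y_def k_def c_def algebra_simps)
    have "c * ln xb powr r \<le> c * (s * ln x) powr r"
      using elim xb c r by (intro mult_left_mono powr_mono2) auto
    then have "Phi_inv (\<lambda>x. c * ln x powr r) xb y = exp ((y / c) powr (1 / r))"
      using Phi_inv_ln_powr[OF c _ xb order_trans[OF _ y]] r by simp
    moreover have "s * ln x \<le> (y / c) powr (1 / r)"
    proof -
      have "((s * ln x) powr r) powr (1 / r) \<le> (y / c) powr (1 / r)"
        using y c r by (intro powr_mono2) (auto simp: field_simps)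
      then show ?thesis using elim s xb r by (simp add: powr_powr)
    qed
    then have "x powr s \<le> exp ((y / c) powr (1 / r))"
      using elim by (simp add: powr_def mult.commute)
    ultimately show ?case using elim by (simp add: y_def)
  qed
  then have "1 \<le> Liminf at_top (\<lambda>x. ereal (Phi_inv (\<lambda>x. c * ln x powr r) xb
      (- ln (gen_lognormal r \<sigma> \<mu> x) - \<alpha> * ln x) / x powr s))"
    by (rule Liminf_bounded)
  moreover have "(0::ereal) < 1" by simp
  ultimately show ?thesis unfolding c_def by (blast intro: less_le_trans)
qed

theorem mainTheorem8:
  shows "(\<forall>phi Phi xb \<theta> g t.
            class_ii phi Phi xb \<and> \<theta> > 1
          \<and> (\<forall>\<alpha> s. \<alpha> \<ge> 0 \<and> 0 < s \<and> s < 1 \<longrightarrow>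
                0 < Liminf at_top (\<lambda>x. ereal (Phi_inv Phi xb (phi x - \<alpha> * ln x) / x powr s)))
          \<and> is_density g \<and> 1 < t \<and> t < \<theta>
          \<and> 0 < Liminf at_top (\<lambda>x. ereal (x powr (t + 1) * g x))
          \<longrightarrow> f_divergence (F_Phi Phi xb \<theta>) g (\<lambda>x. exp (- phi x)) = \<infinity>)
       \<and> (\<forall>r \<sigma> \<mu> xb. r > 1 \<and> \<sigma> > 0 \<and> xb > 1 \<longrightarrow>
            (\<forall>\<alpha> s. \<alpha> \<ge> 0 \<and> 0 < s \<and> s < 1 \<longrightarrow>
                0 < Liminf at_top (\<lambda>x. ereal
                   (Phi_inv (\<lambda>x. (1 / (r * \<sigma> powr r)) * ln x powr r) xb
                      ((\<lambda>x. - ln (gen_lognormal r \<sigma> \<mu> x)) x - \<alpha> * ln x) / x powr s))))"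
proof (intro conjI allI impI, goal_cases)
  case (1 phi Phi xb \<theta> g t)
  then show ?case by (intro f_divergence_F_Phi_eq_infinity[where t = t]) auto
next
  case (2 r \<sigma> \<mu> xb \<alpha> s)
  then show ?case using gen_lognormal_Phi_inv_growth[of r \<sigma> xb s \<mu> \<alpha>] by simp
qed

end
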